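(* $\mathrm{cof}^{*}(\mathcal{S}pl)=\mathfrak{c}$.
   Context: For an infinite $A\subseteq\omega$, let $S(A)$ be the set of all $\sigma\in2^{<\omega}$ such that $\sigma$ is constant on $A\cap\mathrm{dom}(\sigma)$. The splitting ideal $\mathcal{S}pl$ is the ideal on $2^{<\omega}$ generated by the sets $S(A)$, $A\in[\omega]^{\omega}$. For an ideal $\mathcal{J}$, $\mathrm{cof}^*(\mathcal{J})=\min\{|\mathcal{F}|:\mathcal{F}\subseteq\mathcal{J}$ and for every $Y\in\mathcal{J}$ there is $F\in\mathcal{F}$ with $Y\subseteq^{*}F\}$. *)

theory Defs
  imports Main "HOL-Library.Equipollence"
begin

text \<open>2^{<omega} is rendered as the type bool list; dom(sigma) = {0..<length sigma}.\<close>

definition S :: "nat set \<Rightarrow> bool list set" where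
  "S A = {\<sigma>. \<forall>i\<in>A. \<forall>j\<in>A. i < length \<sigma> \<longrightarrow> j < length \<sigma> \<longrightarrow> \<sigma> ! i = \<sigma> ! j}"

definition Spl :: "bool list set set" where
  "Spl = {Y. \<exists>G. finite G \<and> G \<subseteq> {S A | A. infinite A} \<and> Y \<subseteq> \<Union>G}"

definition almost_subset :: "'a set \<Rightarrow> 'a set \<Rightarrow> bool" where
  "almost_subset Y F \<longleftrightarrow> finite (Y - F)"

definition cofinal_star :: "'a set set \<Rightarrow> 'a set set \<Rightarrow> bool" where
  "cofinal_star J \<F> \<longleftrightarrow> \<F> \<subseteq> J \<and> (\<forall>Y\<in>J. \<exists>F\<in>\<F>. almost_subset Y F)"

end

theory Submission
  imports Defs "HOL-Library.Countable"
begin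

text \<open>
  The ideal \<open>Spl\<close> consists of subsets of a countable set and contains all \<open>\<frak>c\<close> subsets
  of \<open>S \<omega>\<close>, so \<open>Spl\<close> itself is a cofinal family of size \<open>\<frak>c\<close>. For the lower bound, the
  key observation is that \<open>S A\<close> is almost covered by \<open>S B\<^sub>1 \<union> \<dots> \<union> S B\<^sub>n\<close> only if some
  \<open>B\<^sub>k \<subseteq> A\<close>: otherwise there is a set \<open>T \<supseteq> A\<close> that splits every \<open>B\<^sub>k\<close>, and all long
  enough initial segments of the characteristic function of \<open>T\<close> lie in \<open>S A\<close> but in no
  \<open>S B\<^sub>k\<close>. Now take an almost disjoint family \<open>D\<^sub>X\<close> of size \<open>\<frak>c\<close> (the branches of the
  binary tree, coded as natural numbers). Each \<open>S D\<^sub>X\<close> is almost contained in a member of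
  a cofinal family \<open>\<F>\<close>, hence \<open>D\<^sub>X\<close> contains one of the finitely many generators used by
  that member. Distinct \<open>X\<close> yield distinct generators, so there are at least \<open>\<frak>c\<close>
  generators in total, whence \<open>|\<F>| \<ge> \<frak>c\<close>.
\<close>

definition char_prefix :: "nat set \<Rightarrow> nat \<Rightarrow> bool list" where
  "char_prefix X n = map (\<lambda>i. i \<in> X) [0..<n]"

lemma length_char_prefix [simp]: "length (char_prefix X n) = n"
  by (simp add: char_prefix_def)

lemma nth_char_prefix [simp]: "i < n \<Longrightarrow> char_prefix X n ! i = (i \<in> X)"
  by (simp add: char_prefix_def)

lemma inj_char_prefix: "inj (char_prefix X)"
  by (metis injI length_char_prefix)

lemma char_prefix_in_S: "A \<subseteq> T \<Longrightarrow> char_prefix T n \<in> S A"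
  by (auto simp: S_def)

lemma char_prefix_notin_S:
  assumes "i \<in> B \<inter> T" "j \<in> B - T" "i < n" "j < n"
  shows "char_prefix T n \<notin> S B"
  using assms by (auto simp: S_def)

lemma exists_splitting_superset:
  assumes "finite BB" "\<forall>B\<in>BB. infinite B" "\<forall>B\<in>BB. \<not> B \<subseteq> A"
  shows "\<exists>T. A \<subseteq> T \<and> (\<forall>B\<in>BB. B \<inter> T \<noteq> {} \<and> B - T \<noteq> {})"
proof -
  have "\<forall>B\<in>BB. \<exists>q. q \<in> B \<and> q \<notin> A"
    using assms(3) by blast
  then obtain p where p: "\<forall>B\<in>BB. p B \<in> B \<and> p B \<notin> A"
    by metis
  define T where "T = - p ` BB"
  have "A \<subseteq> T"
    using p unfolding T_def by blast
  moreover have "B \<inter> T \<noteq> {}" if "B \<in> BB" for B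
  proof -
    have "infinite (B - p ` BB)"
      using that assms(1,2) by (simp add: Diff_infinite_finite)
    then show ?thesis
      unfolding T_def by (metis Diff_eq finite.emptyI)
  qed
  moreover have "B - T \<noteq> {}" if "B \<in> BB" for B
    using that p unfolding T_def by blast
  ultimately show ?thesis by blast
qed

lemma almost_subset_S_Union_imp_subset:
  assumes fin: "finite BB" and inf: "\<forall>B\<in>BB. infinite B"
    and cov: "almost_subset (S A) (\<Union>(S ` BB))"
  shows "\<exists>B\<in>BB. B \<subseteq> A"
proof (rule ccontr)
  assume "\<not> ?thesis"
  then have "\<forall>B\<in>BB. \<not> B \<subseteq> A"
    by blast
  from exists_splitting_superset[OF fin inf this] obtain T
    where "A \<subseteq> T" and splits: "\<forall>B\<in>BB. B \<inter> T \<noteq> {} \<and> B - T \<noteq> {}"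
    by blast
  from splits have "\<forall>B\<in>BB. \<exists>i j. i \<in> B \<inter> T \<and> j \<in> B - T"
    by blast
  then obtain i j where ij: "\<forall>B\<in>BB. i B \<in> B \<inter> T \<and> j B \<in> B - T"
    by metis
  have "finite (i ` BB \<union> j ` BB)"
    using fin by blast
  then obtain N where N: "\<forall>m\<in>i ` BB \<union> j ` BB. m < N"
    using finite_nat_set_iff_bounded by blast
  have "char_prefix T n \<in> S A - \<Union>(S ` BB)" if "N \<le> n" for n
  proof -
    have "char_prefix T n \<notin> S B" if "B \<in> BB" for B
    proof (rule char_prefix_notin_S)
      show "i B \<in> B \<inter> T" "j B \<in> B - T"
        using ij that by auto
      have "i B < N" "j B < N"
        using N that by auto
      then show "i B < n" "j B < n"
        using \<open>N \<le> n\<close> by linarith+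
    qed
    then show ?thesis
      using char_prefix_in_S[OF \<open>A \<subseteq> T\<close>] by blast
  qed
  then have "char_prefix T ` {N..} \<subseteq> S A - \<Union>(S ` BB)"
    by auto
  moreover have "infinite (char_prefix T ` {N..})"
    using finite_imageD inj_on_subset[OF inj_char_prefix subset_UNIV] infinite_Ici by blast
  ultimately show False
    using cov finite_subset unfolding almost_subset_def by blast
qed

definition branch :: "nat set \<Rightarrow> nat set" where
  "branch X = to_nat ` range (char_prefix X)"

lemma infinite_branch: "infinite (branch X)"
proof -
  have "inj (to_nat \<circ> char_prefix X)"
    by (rule inj_compose[OF inj_to_nat inj_char_prefix])
  then have "infinite (range (to_nat \<circ> char_prefix X))"
    using finite_imageD infinite_UNIV_nat by blast
  then show ?thesis
    by (simp add: branch_def image_comp)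
qed

lemma finite_branch_Int:
  assumes "X \<noteq> Y" shows "finite (branch X \<inter> branch Y)"
proof -
  obtain d where d: "(d \<in> X) \<noteq> (d \<in> Y)" using assms by blast
  have prefix_eq_imp_le: "n \<le> d" if "char_prefix X n = char_prefix Y m" for n m
  proof (rule ccontr)
    assume "\<not> n \<le> d"
    moreover have "n = m" using that by (metis length_char_prefix)
    ultimately show False using that d by (metis not_le nth_char_prefix)
  qed
  have "branch X \<inter> branch Y \<subseteq> to_nat ` char_prefix X ` {..d}"
  proof
    fix z assume "z \<in> branch X \<inter> branch Y"
    then obtain n m where z: "z = to_nat (char_prefix X n)" "char_prefix X n = char_prefix Y m"
      unfolding branch_def by auto
    then show "z \<in> to_nat ` char_prefix X ` {..d}"
      using prefix_eq_imp_le[OF z(2)] unfolding z(1) by blast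
  qed
  then show ?thesis using finite_subset by blast
qed

lemma in_Spl_iff: "Y \<in> Spl \<longleftrightarrow> (\<exists>BB. finite BB \<and> (\<forall>B\<in>BB. infinite B) \<and> Y \<subseteq> \<Union>(S ` BB))"
proof
  have generators: "{S A | A. infinite A} = S ` {A. infinite A}"
    by blast
  assume "Y \<in> Spl"
  then obtain G where G: "finite G" "G \<subseteq> S ` {A. infinite A}" "Y \<subseteq> \<Union>G"
    unfolding Spl_def generators by blast
  from finite_subset_image[OF G(1,2)] obtain BB
    where "BB \<subseteq> {A. infinite A}" "finite BB" "G = S ` BB"
    by blast
  with G(3) show "\<exists>BB. finite BB \<and> (\<forall>B\<in>BB. infinite B) \<and> Y \<subseteq> \<Union>(S ` BB)"
    by blast
next
  assume "\<exists>BB. finite BB \<and> (\<forall>B\<in>BB. infinite B) \<and> Y \<subseteq> \<Union>(S ` BB)"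
  then obtain BB where "finite BB" "\<forall>B\<in>BB. infinite B" "Y \<subseteq> \<Union>(S ` BB)"
    by blast
  moreover have "S ` BB \<subseteq> {S A | A. infinite A}"
    using \<open>\<forall>B\<in>BB. infinite B\<close> by blast
  ultimately show "Y \<in> Spl"
    unfolding Spl_def by blast
qed

lemma S_in_Spl: "infinite A \<Longrightarrow> S A \<in> Spl"
  unfolding in_Spl_iff by (intro exI[of _ "{A}"]) auto

lemma Spl_eqpoll_continuum: "Spl \<approx> (UNIV :: nat set set)"
proof (rule lepoll_antisym)
  show "Spl \<lesssim> (UNIV :: nat set set)"
    unfolding lepoll_def by (intro exI[of _ "image to_nat"]) (auto simp: inj_on_def inj_image_eq_iff)
  let ?stripes = "\<lambda>X. (\<lambda>n. replicate n True) ` X"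
  have "?stripes X \<in> Spl" for X
    unfolding in_Spl_iff by (intro exI[of _ "{UNIV}"]) (auto simp: S_def)
  moreover have "inj ?stripes"
    by (rule injI) (metis inj_image_eq_iff inj_onI length_replicate)
  ultimately show "(UNIV :: nat set set) \<lesssim> Spl"
    unfolding lepoll_def by blast
qed

lemma UN_finite_lepoll_index:
  includes cardinal_syntax
  assumes "\<forall>i\<in>I. finite (A i)" "infinite (\<Union>i\<in>I. A i)"
  shows "(\<Union>i\<in>I. A i) \<lesssim> I"
proof -
  have "infinite I" using assms by blast
  then have "\<forall>i\<in>I. |A i| \<le>o |I|"
    using assms(1) finite_lepoll_infinite by (metis card_of_ordLeq lepoll_def)
  then have "|\<Union>i\<in>I. A i| \<le>o |I|"
    by (rule card_of_UNION_ordLeq_infinite[OF \<open>infinite I\<close> ordLeq_refl[OF card_of_Card_order]])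
  then show ?thesis by (metis card_of_ordLeq lepoll_def)
qed

lemma UNIV_lepoll_if_refines_almost_disjoint:
  fixes D :: "'a \<Rightarrow> 'b set"
  assumes ad: "\<forall>x y. x \<noteq> y \<longrightarrow> finite (D x \<inter> D y)"
    and refines: "\<forall>x. \<exists>B\<in>U. infinite B \<and> B \<subseteq> D x"
  shows "(UNIV :: 'a set) \<lesssim> U"
proof -
  obtain h where h: "\<forall>x. h x \<in> U \<and> infinite (h x) \<and> h x \<subseteq> D x"
    using refines by metis
  have "inj h"
  proof (rule injI)
    fix x y assume "h x = h y"
    then have "h x \<subseteq> D x \<inter> D y" using h by (metis Int_subset_iff)
    then show "x = y" using h ad finite_subset by blast
  qed
  then show ?thesis unfolding lepoll_def using h by blast
qed

lemma cofinal_star_refl: "cofinal_star J J"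
  unfolding cofinal_star_def almost_subset_def by (metis Diff_cancel finite.emptyI order_refl)

lemma cofinal_star_Spl_lepoll:
  assumes cof: "cofinal_star Spl \<F>"
  shows "(UNIV :: nat set set) \<lesssim> \<F>"
proof -
  have "\<F> \<subseteq> Spl"
    using cof by (simp add: cofinal_star_def)
  then have "\<forall>F\<in>\<F>. \<exists>BB. finite BB \<and> (\<forall>B\<in>BB. infinite B) \<and> F \<subseteq> \<Union>(S ` BB)"
    using in_Spl_iff by blast
  then obtain BB where BB: "\<forall>F\<in>\<F>. finite (BB F) \<and> (\<forall>B\<in>BB F. infinite B) \<and> F \<subseteq> \<Union>(S ` BB F)"
    by metis
  define U where "U = (\<Union>F\<in>\<F>. BB F)"
  have "\<exists>B\<in>U. infinite B \<and> B \<subseteq> branch X" for X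
  proof -
    obtain F where F: "F \<in> \<F>" "almost_subset (S (branch X)) F"
      using cof S_in_Spl[OF infinite_branch] unfolding cofinal_star_def by blast
    have "S (branch X) - \<Union>(S ` BB F) \<subseteq> S (branch X) - F"
      using BB F(1) by blast
    then have "almost_subset (S (branch X)) (\<Union>(S ` BB F))"
      using F(2) finite_subset unfolding almost_subset_def by blast
    moreover have "finite (BB F)" "\<forall>B\<in>BB F. infinite B"
      using BB F(1) by auto
    ultimately obtain B where "B \<in> BB F" "B \<subseteq> branch X"
      using almost_subset_S_Union_imp_subset by blast
    then show ?thesis
      using BB F(1) unfolding U_def by blast
  qed
  then have "(UNIV :: nat set set) \<lesssim> U"
    by (intro UNIV_lepoll_if_refines_almost_disjoint[of branch]) (simp_all add: finite_branch_Int)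
  moreover have "(UNIV :: nat set) \<lesssim> (UNIV :: nat set set)"
    using lepoll_Pow_self[of "UNIV :: nat set"] by simp
  ultimately have "infinite U"
    using infinite_le_lepoll lepoll_trans by blast
  moreover have "\<forall>F\<in>\<F>. finite (BB F)"
    using BB by blast
  ultimately have "U \<lesssim> \<F>"
    unfolding U_def using UN_finite_lepoll_index by blast
  then show ?thesis
    using \<open>(UNIV :: nat set set) \<lesssim> U\<close> lepoll_trans by blast
qed

theorem mainTheorem12:
  shows "(\<exists>\<F>. cofinal_star Spl \<F> \<and> \<F> \<approx> (UNIV :: nat set set))
       \<and> (\<forall>\<F>. cofinal_star Spl \<F> \<longrightarrow> (UNIV :: nat set set) \<lesssim> \<F>)"
  using cofinal_star_refl Spl_eqpoll_continuum cofinal_star_Spl_lepoll by blast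

end
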